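(* For every $\xi\in\Xi$, the hybrid system $\mathcal H_\xi$ renders $\mathcal A_s$ strongly forward invariant for the sub-state $\tau$, and $\mathcal A:=\mathcal A_s\times\mathbb Z_{\ge0}$ strongly forward invariant for the state $x$: every complete solution $x=(\tau,\lambda)$ of $\mathcal H_\xi$ with $\tau(0,0)\in\mathcal A_s$ satisfies $\tau(t,k)\in\mathcal A_s$ (equivalently $x(t,k)\in\mathcal A$) for all $(t,k)\in\operatorname{dom}(x)$.
   Context: $\mathcal G=(\mathcal V,\mathcal E)$ is a simple digraph on $\mathcal V=\{1,\dots,N\}$; $(i,j)\in\mathcal E$ means $j$ is an out-neighbor of $i$; $\mathcal E_i^-$ is the set of out-edges of $i$. Fix $T>0$, $r\in(0,1)^N$. A subgraph $(\mathcal V,\mathcal E')$, $\mathcal E'\subseteq\mathcal E$, is feasible if for every $i$ either $\mathcal E_i^-\subseteq\mathcal E'$ or $\mathcal E_i^-\cap\mathcal E'=\varnothing$. $\Xi$ is the set of infinite sequences $\xi=\phi_1\phi_2\cdots$ of feasible subgraphs, $\phi_\lambda=(\mathcal V,\mathcal E_\lambda)$. Hybrid system $\mathcal H_\xi$: state $x=(\tau,\lambda)\in\mathbb R^N_{\ge0}\times\mathbb Z_{\ge0}$; flow set $C=[0,1]^N\times\mathbb Z_{\ge0}$ with $\dot\tau=\frac1T\mathbf 1_N$, $\dot\lambda=0$; jump set $D=\{\tau\in[0,1]^N:\max_i\tau_i=1\}\times\mathbb Z_{\ge0}$ with $x^+\in G_{\lambda+1}(\tau)\times\{\lambda+1\}$,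 where $G_\lambda$ is the outer-semicontinuous hull of $G_\lambda^0(\tau)=\{g\in\mathbb R^N:g_i=0,\ g_j\in\mathcal R_{j,\lambda}(\tau)\ \forall j\ne i\}$, $i$ an agent with $\tau_i=1$, and $\mathcal R_{j,\lambda}(\tau)=\{0\}$, $\{0,1\}$, $\{1\}$ if $(i,j)\in\mathcal E_\lambda$ and $\tau_j<r_j$, $=r_j$, $>r_j$ respectively, and $\{\tau_j\}$ if $(i,j)\notin\mathcal E_\lambda$. Solutions are hybrid arcs on hybrid time domains that flow in $C$ according to the flow map and jump from $D$ via the jump map; complete means the domain is unbounded. $\mathcal A_s:=\{\mu\mathbf 1_N:\mu\in[0,1]\}\cup\{0,1\}^N$. *)

theory Defs
  imports "HOL-Analysis.Analysis"
begin

text \<open>Agents are the elements of a finite type 'n (playing the role of {1..N});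
  states tau are vectors in real^'n, edges are pairs (i,j) meaning j is an
  out-neighbour of i.\<close>

definition simple_digraph :: "('n \<times> 'n) set \<Rightarrow> bool" where
  "simple_digraph E \<longleftrightarrow> (\<forall>i. (i, i) \<notin> E)"

definition out_edges :: "('n \<times> 'n) set \<Rightarrow> 'n \<Rightarrow> ('n \<times> 'n) set" where
  "out_edges E i = {e \<in> E. fst e = i}"

definition feasible_subgraph :: "('n \<times> 'n) set \<Rightarrow> ('n \<times> 'n) set \<Rightarrow> bool" where
  "feasible_subgraph E E' \<longleftrightarrow> E' \<subseteq> E \<and>
     (\<forall>i. out_edges E i \<subseteq> E' \<or> out_edges E i \<inter> E' = {})"

text \<open>A sequence xi = phi_1 phi_2 ... of feasible subgraphs (entry 0 is unused).\<close>
definition feasible_seq :: "('n \<times> 'n) set \<Rightarrow> (nat \<Rightarrow> ('n \<times> 'n) set) \<Rightarrow> bool" where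
  "feasible_seq E \<xi> \<longleftrightarrow> (\<forall>k\<ge>1. feasible_subgraph E (\<xi> k))"

definition unit_box :: "(real^'n) set" where
  "unit_box = {\<tau>. \<forall>i. 0 \<le> \<tau> $ i \<and> \<tau> $ i \<le> 1}"

definition flow_set :: "((real^'n) \<times> nat) set" where
  "flow_set = unit_box \<times> UNIV"

definition jump_set :: "((real^'n) \<times> nat) set" where
  "jump_set = {\<tau>. \<tau> \<in> unit_box \<and> (\<exists>i. \<tau> $ i = 1)} \<times> UNIV"

definition flow_map :: "real \<Rightarrow> real^'n \<Rightarrow> real^'n" where
  "flow_map T \<tau> = (\<chi> i. 1 / T)"

definition reset_set :: "('n \<times> 'n) set \<Rightarrow> real^'n \<Rightarrow> 'n \<Rightarrow> 'n \<Rightarrow> real^'n \<Rightarrow> real set" where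
  "reset_set E' r i j \<tau> =
     (if (i, j) \<in> E' then
        (if \<tau> $ j < r $ j then {0} else if \<tau> $ j = r $ j then {0, 1} else {1})
      else {\<tau> $ j})"

definition G0 :: "('n \<times> 'n) set \<Rightarrow> real^'n \<Rightarrow> real^'n \<Rightarrow> (real^'n) set" where
  "G0 E' r \<tau> = {g. \<tau> \<in> unit_box \<and> (\<exists>i. \<tau> $ i = 1 \<and> g $ i = 0 \<and>
        (\<forall>j. j \<noteq> i \<longrightarrow> g $ j \<in> reset_set E' r i j \<tau>))}"

text \<open>Outer-semicontinuous hull: the set-valued map whose graph is the closure
  of the graph of G0.\<close>
definition Gmap :: "('n \<times> 'n) set \<Rightarrow> real^'n \<Rightarrow> real^'n \<Rightarrow> (real^'n) set" where
  "Gmap E' r \<tau> = {g. (\<tau>, g) \<in> closure {(\<tau>', g'). g' \<in> G0 E' r \<tau>'}}"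

definition hybrid_time_domain :: "(real \<times> nat) set \<Rightarrow> bool" where
  "hybrid_time_domain hd_dom \<longleftrightarrow> hd_dom \<subseteq> {0..} \<times> UNIV \<and>
     (\<forall>(T, J) \<in> hd_dom. \<exists>t :: nat \<Rightarrow> real. t 0 = 0 \<and> (\<forall>j\<le>J. t j \<le> t (Suc j)) \<and>
        hd_dom \<inter> ({0..T} \<times> {..J}) = {(s, j). j \<le> J \<and> t j \<le> s \<and> s \<le> t (Suc j)})"

definition I_j :: "(real \<times> nat) set \<Rightarrow> nat \<Rightarrow> real set" where
  "I_j hd_dom j = {t. (t, j) \<in> hd_dom}"

text \<open>During flow, t \<mapsto> tau(t,j) is locally absolutely continuous with derivative
  equal to the flow map a.e., expressed in integral (Caratheodory) form, and
  lambda is constant.\<close>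
definition is_solution ::
  "real \<Rightarrow> real^'n \<Rightarrow> (nat \<Rightarrow> ('n \<times> 'n) set) \<Rightarrow> (real \<times> nat) set
     \<Rightarrow> (real \<Rightarrow> nat \<Rightarrow> (real^'n) \<times> nat) \<Rightarrow> bool" where
  "is_solution T r \<xi> hd_dom x \<longleftrightarrow>
     hybrid_time_domain hd_dom \<and> (0, 0) \<in> hd_dom \<and>
     x 0 0 \<in> closure flow_set \<union> jump_set \<and>
     (\<forall>j. interior (I_j hd_dom j) \<noteq> {} \<longrightarrow>
        (\<forall>t \<in> interior (I_j hd_dom j). x t j \<in> flow_set) \<and>
        (\<forall>s \<in> I_j hd_dom j. \<forall>t \<in> I_j hd_dom j. s \<le> t \<longrightarrow>
           (\<lambda>u. flow_map T (fst (x u j))) absolutely_integrable_on {s..t} \<and>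
           fst (x t j) = fst (x s j) + integral {s..t} (\<lambda>u. flow_map T (fst (x u j))) \<and>
           snd (x t j) = snd (x s j))) \<and>
     (\<forall>t j. (t, j) \<in> hd_dom \<and> (t, Suc j) \<in> hd_dom \<longrightarrow>
        x t j \<in> jump_set \<and>
        fst (x t (Suc j)) \<in> Gmap (\<xi> (Suc (snd (x t j)))) r (fst (x t j)) \<and>
        snd (x t (Suc j)) = Suc (snd (x t j)))"

definition complete_domain :: "(real \<times> nat) set \<Rightarrow> bool" where
  "complete_domain hd_dom \<longleftrightarrow> (\<forall>M. \<exists>(t, j) \<in> hd_dom. t + real j > M)"

definition A_s :: "(real^'n) set" where
  "A_s = {(\<chi> i. \<mu>) | \<mu>. 0 \<le> \<mu> \<and> \<mu> \<le> 1} \<union> {\<tau>. \<forall>i. \<tau> $ i \<in> {0, 1}}"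

definition A_set :: "((real^'n) \<times> nat) set" where
  "A_set = A_s \<times> UNIV"

end

theory Submission
  imports Defs
begin

text \<open>A jump can only occur from a point of \<open>A_s\<close> with some coordinate equal to 1,
  and such a point is a binary vector. Every reset coordinate lies in \<open>{0, 1, \<tau>\<^sub>j}\<close>, a
  closed condition that passes to the outer-semicontinuous hull, so jumps map binary
  vectors to binary vectors. Along a flow all coordinates grow at the common rate \<open>1/T\<close>
  inside \<open>[0,1]\<^sup>N\<close>: a binary vector with a coordinate 1 cannot flow at all, and a
  consensus vector \<open>\<mu>\<one>\<close> flows to a consensus vector.\<close>

lemma A_s_cases:
  assumes "\<tau> \<in> A_s"
  obtains (consensus) \<mu> where "0 \<le> \<mu>" "\<mu> \<le> 1" "\<tau> = (\<chi> i. \<mu>)"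
    | (binary) "\<forall>i. \<tau> $ i \<in> {0, 1}"
  using assms unfolding A_s_def by blast

lemma A_s_binary: "\<forall>i. \<tau> $ i \<in> {0, 1} \<Longrightarrow> \<tau> \<in> A_s"
  unfolding A_s_def by blast

lemma A_s_consensus: "0 \<le> \<mu> \<Longrightarrow> \<mu> \<le> 1 \<Longrightarrow> (\<chi> i. \<mu>) \<in> A_s"
  unfolding A_s_def by blast

lemma A_s_with_coordinate_one_binary:
  assumes "\<tau> \<in> A_s" and "\<tau> $ i = 1"
  shows "\<forall>j. \<tau> $ j \<in> {0, 1}"
  using assms by (cases rule: A_s_cases) auto

lemma A_s_add_const:
  fixes \<tau> :: "real^'n"
  assumes "\<tau> \<in> A_s" and "0 \<le> c"
    and box: "\<And>\<epsilon>. 0 < \<epsilon> \<Longrightarrow> \<epsilon> < c \<Longrightarrow> \<tau> + (\<chi> i. \<epsilon>) \<in> unit_box"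
  shows "\<tau> + (\<chi> i. c) \<in> A_s"
proof (cases "c = 0")
  case True
  then show ?thesis using assms(1) by (simp add: zero_vec_def [symmetric])
next
  case False
  then have "0 < c" using \<open>0 \<le> c\<close> by simp
  have bounded: "\<tau> $ i + c \<le> 1" for i
  proof (rule dense_le_bounded)
    show "\<tau> $ i < \<tau> $ i + c" using \<open>0 < c\<close> by simp
    fix w assume "\<tau> $ i < w" "w < \<tau> $ i + c"
    then have "\<tau> + (\<chi> k. w - \<tau> $ i) \<in> unit_box" by (intro box) auto
    then have "(\<tau> + (\<chi> k. w - \<tau> $ i)) $ i \<le> 1" unfolding unit_box_def by blast
    then show "w \<le> 1" by simp
  qed
  from assms(1) obtain \<mu> where "0 \<le> \<mu>" "\<tau> = (\<chi> i. \<mu>)"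
  proof (cases rule: A_s_cases)
    case consensus
    then show ?thesis using that by blast
  next
    case binary
    have "\<tau> $ i \<noteq> 1" for i using bounded[of i] \<open>0 < c\<close> by auto
    with binary have "\<tau> = (\<chi> i. 0)" by (auto simp: vec_eq_iff)
    then show ?thesis using that[of 0] by simp
  qed
  moreover have "\<mu> + c \<le> 1" using bounded \<open>\<tau> = (\<chi> i. \<mu>)\<close> by auto
  moreover have "\<tau> + (\<chi> i. c) = (\<chi> i. \<mu> + c)" using \<open>\<tau> = (\<chi> i. \<mu>)\<close> by (simp add: vec_eq_iff)
  ultimately show ?thesis using \<open>0 < c\<close> A_s_consensus[of "\<mu> + c"] by simp
qed

lemma Gmap_component:
  fixes \<tau> g :: "real^'n"
  assumes "g \<in> Gmap E' r \<tau>"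
  shows "g $ j \<in> {0, 1, \<tau> $ j}"
proof -
  let ?S = "{p :: (real^'n) \<times> (real^'n). snd p $ j * (snd p $ j - 1) * (snd p $ j - fst p $ j) = 0}"
  \<comment> \<open>the condition \<open>g\<^sub>j \<in> {0, 1, \<tau>\<^sub>j}\<close> as the zero set of a continuous function\<close>
  have closed: "closed ?S"
    by (intro closed_Collect_eq continuous_on_mult continuous_on_diff continuous_on_const
        continuous_on_component continuous_on_fst continuous_on_snd continuous_on_id)
  have graph: "(\<tau>', g') \<in> ?S"
    if "g' \<in> G0 E' r \<tau>'" for \<tau>' g'
  proof -
    from that obtain i where "g' $ i = 0" "\<forall>j. j \<noteq> i \<longrightarrow> g' $ j \<in> reset_set E' r i j \<tau>'"
      unfolding G0_def by blast
    moreover have "reset_set E' r i j \<tau>' \<subseteq> {0, 1, \<tau>' $ j}"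
      unfolding reset_set_def by auto
    ultimately have "g' $ j \<in> {0, 1, \<tau>' $ j}"
      by (cases "j = i") auto
    then show ?thesis by auto
  qed
  have "{(\<tau>', g'). g' \<in> G0 E' r \<tau>'} \<subseteq> ?S"
    using graph by blast
  from closure_minimal[OF this closed] have "(\<tau>, g) \<in> ?S"
    using assms unfolding Gmap_def by blast
  then show ?thesis by simp
qed

lemma Gmap_binary:
  assumes "\<forall>i. \<tau> $ i \<in> {0, 1}" and "g \<in> Gmap E' r \<tau>"
  shows "\<forall>i. g $ i \<in> {0, 1}"
  using assms Gmap_component by fastforce

lemma hybrid_time_domain_nonneg:
  "hybrid_time_domain D \<Longrightarrow> (t, j) \<in> D \<Longrightarrow> 0 \<le> t"
  unfolding hybrid_time_domain_def by auto

lemma hybrid_time_domain_segment: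
  assumes D: "hybrid_time_domain D" and "(s, j) \<in> D" "(t, j) \<in> D" "s \<le> t"
  shows "{s..t} \<subseteq> I_j D j"
proof -
  obtain tt :: "nat \<Rightarrow> real" where
    tt: "D \<inter> ({0..t} \<times> {..j}) = {(u, i). i \<le> j \<and> tt i \<le> u \<and> u \<le> tt (Suc i)}"
    using D \<open>(t, j) \<in> D\<close> unfolding hybrid_time_domain_def by blast
  have "0 \<le> s" using hybrid_time_domain_nonneg D \<open>(s, j) \<in> D\<close> by blast
  then have "(s, j) \<in> D \<inter> ({0..t} \<times> {..j})" "(t, j) \<in> D \<inter> ({0..t} \<times> {..j})"
    using assms by auto
  then have "tt j \<le> s" "t \<le> tt (Suc j)"
    unfolding tt by auto
  then have "{s..t} \<times> {j} \<subseteq> D \<inter> ({0..t} \<times> {..j})"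
    unfolding tt by auto
  then show ?thesis
    unfolding I_j_def by auto
qed

lemma hybrid_time_domain_jump_time:
  assumes D: "hybrid_time_domain D" and "(t, Suc k) \<in> D"
  obtains s where "s \<le> t" "(s, k) \<in> D" "(s, Suc k) \<in> D"
proof -
  obtain tt :: "nat \<Rightarrow> real" where
    mono: "\<forall>j\<le>Suc k. tt j \<le> tt (Suc j)" and
    tt: "D \<inter> ({0..t} \<times> {..Suc k}) = {(u, i). i \<le> Suc k \<and> tt i \<le> u \<and> u \<le> tt (Suc i)}"
    using D \<open>(t, Suc k) \<in> D\<close> unfolding hybrid_time_domain_def by blast
  have "0 \<le> t" using hybrid_time_domain_nonneg D \<open>(t, Suc k) \<in> D\<close> by blast
  then have "(t, Suc k) \<in> D \<inter> ({0..t} \<times> {..Suc k})"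
    using assms by auto
  then have "tt (Suc k) \<le> t"
    unfolding tt by auto
  moreover have "(tt (Suc k), k) \<in> D \<inter> ({0..t} \<times> {..Suc k})"
    and "(tt (Suc k), Suc k) \<in> D \<inter> ({0..t} \<times> {..Suc k})"
    unfolding tt using mono by auto
  ultimately show ?thesis using that by blast
qed

lemma solution_flowD:
  assumes "is_solution T r \<xi> D x" and "interior (I_j D j) \<noteq> {}"
  shows "\<forall>t\<in>interior (I_j D j). x t j \<in> flow_set"
    and "\<forall>s\<in>I_j D j. \<forall>t\<in>I_j D j. s \<le> t \<longrightarrow>
      fst (x t j) = fst (x s j) + integral {s..t} (\<lambda>u. flow_map T (fst (x u j)))"
  using assms unfolding is_solution_def by blast+

lemma solution_jumpD:
  assumes "is_solution T r \<xi> D x" and "(t, j) \<in> D" "(t, Suc j) \<in> D"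
  shows "x t j \<in> jump_set"
    and "fst (x t (Suc j)) \<in> Gmap (\<xi> (Suc (snd (x t j)))) r (fst (x t j))"
  using assms unfolding is_solution_def by blast+

lemma solution_flow:
  assumes sol: "is_solution T r \<xi> D x"
    and "(s, j) \<in> D" "(t, j) \<in> D" "s < t"
  shows "\<forall>u\<in>{s..t}. fst (x u j) = fst (x s j) + (\<chi> i. (u - s) / T)"
    and "\<forall>u\<in>{s<..<t}. fst (x u j) \<in> unit_box"
proof -
  have D: "hybrid_time_domain D" using sol by (simp add: is_solution_def)
  have seg: "{s..t} \<subseteq> I_j D j"
    using hybrid_time_domain_segment[OF D] assms(2-4) by simp
  then have inner: "{s<..<t} \<subseteq> interior (I_j D j)"
    by (intro interior_maximal) auto
  then have "interior (I_j D j) \<noteq> {}" using \<open>s < t\<close> by fastforce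
  note flow = solution_flowD[OF sol this]
  show "\<forall>u\<in>{s..t}. fst (x u j) = fst (x s j) + (\<chi> i. (u - s) / T)"
  proof
    fix u assume "u \<in> {s..t}"
    then have "s \<in> I_j D j" "u \<in> I_j D j" "s \<le> u"
      using seg \<open>s < t\<close> by auto
    then have "fst (x u j) = fst (x s j) + integral {s..u} (\<lambda>v. flow_map T (fst (x v j)))"
      by (rule flow(2)[rule_format])
    then show "fst (x u j) = fst (x s j) + (\<chi> i. (u - s) / T)"
      using \<open>u \<in> {s..t}\<close> by (simp add: flow_map_def vec_eq_iff)
  qed
  show "\<forall>u\<in>{s<..<t}. fst (x u j) \<in> unit_box"
    using flow(1) inner unfolding flow_set_def by (auto simp: mem_Times_iff)
qed

lemma solution_flow_preserves_A_s:
  assumes sol: "is_solution T r \<xi> D x" and "0 < T"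
    and "(s, j) \<in> D" "(t, j) \<in> D" "s \<le> t" and "fst (x s j) \<in> A_s"
  shows "fst (x t j) \<in> A_s"
proof (cases "s = t")
  case False
  then have "s < t" using \<open>s \<le> t\<close> by simp
  note affine = solution_flow(1)[OF sol assms(3,4) \<open>s < t\<close>]
    and box = solution_flow(2)[OF sol assms(3,4) \<open>s < t\<close>]
  have "fst (x s j) + (\<chi> i. (t - s) / T) \<in> A_s"
  proof (rule A_s_add_const)
    fix \<epsilon> assume "0 < \<epsilon>" "\<epsilon> < (t - s) / T"
    then have u: "s + T * \<epsilon> \<in> {s<..<t}" using \<open>0 < T\<close> by (auto simp: field_simps)
    then have "fst (x (s + T * \<epsilon>) j) = fst (x s j) + (\<chi> i. (s + T * \<epsilon> - s) / T)"
      by (intro affine[rule_format]) auto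
    then have "fst (x (s + T * \<epsilon>) j) = fst (x s j) + (\<chi> i. \<epsilon>)"
      using \<open>0 < T\<close> by simp
    then show "fst (x s j) + (\<chi> i. \<epsilon>) \<in> unit_box"
      using box u by metis
  qed (use assms \<open>s < t\<close> in auto)
  moreover have "fst (x t j) = fst (x s j) + (\<chi> i. (t - s) / T)"
    using \<open>s < t\<close> by (intro affine[rule_format]) auto
  ultimately show ?thesis by simp
qed (use assms in simp)

lemma solution_jump_preserves_A_s:
  assumes sol: "is_solution T r \<xi> D x"
    and "(s, k) \<in> D" "(s, Suc k) \<in> D" and "fst (x s k) \<in> A_s"
  shows "fst (x s (Suc k)) \<in> A_s"
proof -
  note jump = solution_jumpD[OF sol assms(2,3)]
  then obtain i where "fst (x s k) $ i = 1"
    unfolding jump_set_def by (auto simp: mem_Times_iff)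
  then have "\<forall>j. fst (x s k) $ j \<in> {0, 1}"
    using A_s_with_coordinate_one_binary \<open>fst (x s k) \<in> A_s\<close> by blast
  then show ?thesis using Gmap_binary[OF _ jump(2)] A_s_binary by blast
qed

theorem lemma2:
  fixes E :: "('n::finite \<times> 'n) set" and T :: real and r :: "real^'n"
    and \<xi> :: "nat \<Rightarrow> ('n \<times> 'n) set"
    and hd_dom :: "(real \<times> nat) set" and x :: "real \<Rightarrow> nat \<Rightarrow> (real^'n) \<times> nat"
  assumes "simple_digraph E"
    and "T > 0"
    and "\<forall>i. 0 < r $ i \<and> r $ i < 1"
    and "feasible_seq E \<xi>"
    and "is_solution T r \<xi> hd_dom x"
    and "complete_domain hd_dom"
    and "fst (x 0 0) \<in> A_s"
  shows "\<forall>(t, k) \<in> hd_dom. fst (x t k) \<in> A_s \<and> x t k \<in> A_set"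
proof -
  note sol = assms(5)
  have D: "hybrid_time_domain hd_dom" and "(0, 0) \<in> hd_dom"
    using sol by (simp_all add: is_solution_def)
  have "fst (x t k) \<in> A_s" if "(t, k) \<in> hd_dom" for t k
    using that
  proof (induction k arbitrary: t)
    case 0
    have "0 \<le> t" using hybrid_time_domain_nonneg[OF D 0] .
    then show ?case
      by (rule solution_flow_preserves_A_s[OF sol \<open>T > 0\<close> \<open>(0, 0) \<in> hd_dom\<close> 0 _ assms(7)])
  next
    case (Suc k)
    then obtain s where "s \<le> t" "(s, k) \<in> hd_dom" "(s, Suc k) \<in> hd_dom"
      using hybrid_time_domain_jump_time[OF D] by blast
    then have "fst (x s (Suc k)) \<in> A_s"
      using solution_jump_preserves_A_s[OF sol] Suc.IH by blast
    then show ?case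
      by (rule solution_flow_preserves_A_s[OF sol \<open>T > 0\<close> \<open>(s, Suc k) \<in> hd_dom\<close> Suc.prems \<open>s \<le> t\<close>])
  qed
  then show ?thesis
    unfolding A_set_def by (auto simp: mem_Times_iff)
qed

end
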